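(* If $K$ is a class of structures with $K\le_c PF$, then $K$ has the substructure property: no $\mathcal{A}_1\in K$ is isomorphic to a substructure of some $\mathcal{A}_2\in K$ unless $\mathcal{A}_1\cong\mathcal{A}_2$.
   Context: Conventions: every structure is for a finite relational language with universe a subset of $\omega$; a class is closed under isomorphism. $D(\mathcal{A})$ is the atomic diagram of $\mathcal{A}$. A computable transformation from $K$ to $K'$ is a c.e. set $\Phi$ of pairs $(\alpha,\varphi)$, $\alpha$ a finite subset of the atomic diagram of a finite structure in the language of $K$, $\varphi$ an atomic sentence or negation of one in the language of $K'$, such that for every $\mathcal{A}\in K$, $\{\varphi:(\exists\alpha\subseteq D(\mathcal{A}))(\alpha,\varphi)\in\Phi\}=D(\mathcal{B})$ for some $\mathcal{B}\in K'$. A computable embedding is a computable transformation with $\mathcal{A}\cong\mathcal{A}'\iff\Phi(\mathcal{A})\cong\Phi(\mathcal{A}')$; $K\le_c K'$ means one exists. $PF$ is the class of finite prime fields (in a relational language). *)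

theory Defs
  imports Main "HOL-Library.Nat_Bijection" "HOL-Computational_Algebra.Primes"
begin

datatype recf = Zf | Sf | Proj nat | Comp recf "recf list" | Prec recf recf | Mn recf

inductive eval :: "recf \<Rightarrow> nat list \<Rightarrow> nat \<Rightarrow> bool" where
  ev_Z: "eval Zf xs 0"
| ev_S: "eval Sf (x # xs) (Suc x)"
| ev_Proj: "i < length xs \<Longrightarrow> eval (Proj i) xs (xs ! i)"
| ev_Comp: "list_all2 (\<lambda>g y. eval g xs y) gs ys \<Longrightarrow> eval f ys z \<Longrightarrow> eval (Comp f gs) xs z"
| ev_Prec0: "eval f xs z \<Longrightarrow> eval (Prec f g) (0 # xs) z"
| ev_PrecS: "eval (Prec f g) (n # xs) y \<Longrightarrow> eval g (y # n # xs) z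
              \<Longrightarrow> eval (Prec f g) (Suc n # xs) z"
| ev_Mn: "eval f (n # xs) 0 \<Longrightarrow> (\<forall>m<n. \<exists>y. y \<noteq> 0 \<and> eval f (m # xs) y)
              \<Longrightarrow> eval (Mn f) xs n"

definition ce :: "nat set \<Rightarrow> bool" where
  "ce A \<longleftrightarrow> (\<exists>f. A = {x. \<exists>y. eval f [x] y})"

text \<open>A finite relational language is a list of arities; relation symbol i (i < length L)
  has arity L ! i.\<close>

type_synonym lang = "nat list"
type_synonym struc = "nat set \<times> (nat \<Rightarrow> nat list \<Rightarrow> bool)"

definition is_structure :: "lang \<Rightarrow> struc \<Rightarrow> bool" where
  "is_structure L A \<longleftrightarrow>
     (\<forall>i xs. snd A i xs \<longrightarrow> i < length L \<and> length xs = L ! i \<and> set xs \<subseteq> fst A)"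

definition iso :: "lang \<Rightarrow> struc \<Rightarrow> struc \<Rightarrow> bool" where
  "iso L A B \<longleftrightarrow> (\<exists>f. bij_betw f (fst A) (fst B) \<and>
     (\<forall>i < length L. \<forall>xs. length xs = L ! i \<and> set xs \<subseteq> fst A \<longrightarrow>
         (snd A i xs \<longleftrightarrow> snd B i (map f xs))))"

definition substructure :: "lang \<Rightarrow> struc \<Rightarrow> struc \<Rightarrow> bool" where
  "substructure L A B \<longleftrightarrow> is_structure L A \<and> fst A \<subseteq> fst B \<and>
     (\<forall>i xs. set xs \<subseteq> fst A \<longrightarrow> (snd A i xs \<longleftrightarrow> snd B i xs))"

definition is_class :: "lang \<Rightarrow> struc set \<Rightarrow> bool" where
  "is_class L K \<longleftrightarrow> K \<subseteq> {A. is_structure L A} \<and>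
     (\<forall>A\<in>K. \<forall>B. is_structure L B \<longrightarrow> iso L A B \<longrightarrow> B \<in> K)"

text \<open>Atomic sentences, with constants for natural numbers: R_i(xs) or n = m.
  A literal is (True, a) for a and (False, a) for the negation of a.\<close>
datatype atom = Rel nat "nat list" | Eq nat nat

type_synonym literal = "bool \<times> atom"

fun atom_consts :: "atom \<Rightarrow> nat set" where
  "atom_consts (Rel i xs) = set xs"
| "atom_consts (Eq n m) = {n, m}"

fun wf_atom :: "lang \<Rightarrow> atom \<Rightarrow> bool" where
  "wf_atom L (Rel i xs) \<longleftrightarrow> i < length L \<and> length xs = L ! i"
| "wf_atom L (Eq n m) \<longleftrightarrow> True"

fun holds :: "struc \<Rightarrow> atom \<Rightarrow> bool" where
  "holds A (Rel i xs) \<longleftrightarrow> snd A i xs"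
| "holds A (Eq n m) \<longleftrightarrow> n = m"

definition diag :: "lang \<Rightarrow> struc \<Rightarrow> literal set" where
  "diag L A = {(b, a). wf_atom L a \<and> atom_consts a \<subseteq> fst A \<and> b = holds A a}"

fun code_atom :: "atom \<Rightarrow> nat" where
  "code_atom (Rel i xs) = 2 * prod_encode (i, list_encode xs)"
| "code_atom (Eq n m) = 2 * prod_encode (n, m) + 1"

definition code_lit :: "literal \<Rightarrow> nat" where
  "code_lit l = prod_encode (if fst l then 1 else 0, code_atom (snd l))"

definition code_pair :: "literal set \<times> literal \<Rightarrow> nat" where
  "code_pair p = prod_encode (set_encode (code_lit ` fst p), code_lit (snd p))"

definition transform_image :: "lang \<Rightarrow> (literal set \<times> literal) set \<Rightarrow> struc \<Rightarrow> literal set" where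
  "transform_image L \<Phi> A = {\<phi>. \<exists>\<alpha>. \<alpha> \<subseteq> diag L A \<and> (\<alpha>, \<phi>) \<in> \<Phi>}"

definition computable_transformation ::
  "lang \<Rightarrow> struc set \<Rightarrow> lang \<Rightarrow> struc set \<Rightarrow> (literal set \<times> literal) set \<Rightarrow> bool" where
  "computable_transformation L K L' K' \<Phi> \<longleftrightarrow>
     ce (code_pair ` \<Phi>) \<and>
     (\<forall>(\<alpha>, \<phi>) \<in> \<Phi>. finite \<alpha> \<and>
        (\<exists>C. is_structure L C \<and> finite (fst C) \<and> \<alpha> \<subseteq> diag L C) \<and> wf_atom L' (snd \<phi>)) \<and>
     (\<forall>A\<in>K. \<exists>B\<in>K'. transform_image L \<Phi> A = diag L' B)"

definition computable_embedding ::
  "lang \<Rightarrow> struc set \<Rightarrow> lang \<Rightarrow> struc set \<Rightarrow> (literal set \<times> literal) set \<Rightarrow> bool" where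
  "computable_embedding L K L' K' \<Phi> \<longleftrightarrow>
     computable_transformation L K L' K' \<Phi> \<and>
     (\<forall>A\<in>K. \<forall>A'\<in>K. \<forall>B B'. is_structure L' B \<longrightarrow> is_structure L' B' \<longrightarrow>
        transform_image L \<Phi> A = diag L' B \<longrightarrow> transform_image L \<Phi> A' = diag L' B' \<longrightarrow>
        (iso L A A' \<longleftrightarrow> iso L' B B'))"

definition leq_c :: "lang \<Rightarrow> struc set \<Rightarrow> lang \<Rightarrow> struc set \<Rightarrow> bool" where
  "leq_c L K L' K' \<longleftrightarrow> (\<exists>\<Phi>. computable_embedding L K L' K' \<Phi>)"

text \<open>Language of fields: symbol 0 = ternary graph of addition, symbol 1 = ternary graph
  of multiplication.\<close>
definition field_lang :: lang where
  "field_lang = [3, 3]"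

definition Zmod_struc :: "nat \<Rightarrow> struc" where
  "Zmod_struc p = ({0..<p}, (\<lambda>i xs. length xs = 3 \<and> set xs \<subseteq> {0..<p} \<and>
      ((i = 0 \<and> (xs ! 0 + xs ! 1) mod p = xs ! 2) \<or>
       (i = 1 \<and> (xs ! 0 * xs ! 1) mod p = xs ! 2))))"

definition PF :: "struc set" where
  "PF = {A. is_structure field_lang A \<and> (\<exists>p. prime p \<and> iso field_lang (Zmod_struc p) A)}"

end

theory Submission
  imports Defs "HOL-Number_Theory.Cong"
begin

(* A computable embedding Phi acts on atomic diagrams by enumeration
   (the image of A is the set of literals enabled by finite pieces of D(A)), so it is
   monotone: a substructure C of A has D(C) included in D(A), hence the diagram of the
   image of C is included in that of the image of A.  For structures, inclusion of
   diagrams is the same as being a substructure.  In the target class PF every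
   substructure is the whole field: the universe of a substructure of Z/q contains a
   nonzero residue and is closed under addition, so it is everything since q is prime.
   Thus the images of C and A are isomorphic, and since Phi reflects isomorphism, so
   are C and A. *)

lemma iso_trans:
  assumes "iso L A B" "iso L B C" shows "iso L A C"
proof -
  obtain f where f: "bij_betw f (fst A) (fst B)"
    "\<forall>i < length L. \<forall>xs. length xs = L ! i \<and> set xs \<subseteq> fst A \<longrightarrow> (snd A i xs \<longleftrightarrow> snd B i (map f xs))"
    using assms(1) unfolding iso_def by blast
  obtain g where g: "bij_betw g (fst B) (fst C)"
    "\<forall>i < length L. \<forall>xs. length xs = L ! i \<and> set xs \<subseteq> fst B \<longrightarrow> (snd B i xs \<longleftrightarrow> snd C i (map g xs))"
    using assms(2) unfolding iso_def by blast
  have "bij_betw (g \<circ> f) (fst A) (fst C)" using f(1) g(1) by (rule bij_betw_trans)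
  moreover have "snd A i xs \<longleftrightarrow> snd C i (map (g \<circ> f) xs)"
    if "i < length L" "length xs = L ! i" "set xs \<subseteq> fst A" for i xs
  proof -
    have "set (map f xs) \<subseteq> fst B" using that(3) f(1) by (auto simp: bij_betw_def)
    then show ?thesis using f(2) g(2) that by simp
  qed
  ultimately show ?thesis unfolding iso_def by blast
qed

lemma substructure_full_iso:
  assumes "substructure L B1 B2" "fst B1 = fst B2"
  shows "iso L B1 B2"
proof -
  have "bij_betw id (fst B1) (fst B2)" using assms(2) by simp
  moreover have "\<forall>i xs. set xs \<subseteq> fst B1 \<longrightarrow> (snd B1 i xs \<longleftrightarrow> snd B2 i (map id xs))"
    using assms(1) unfolding substructure_def by simp
  ultimately show ?thesis unfolding iso_def by blast
qed

lemma substructure_diag_subset: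
  assumes "substructure L C A" shows "diag L C \<subseteq> diag L A"
proof
  fix l assume "l \<in> diag L C"
  then obtain b a where l: "l = (b, a)" "wf_atom L a" "atom_consts a \<subseteq> fst C" "b = holds C a"
    unfolding diag_def by auto
  have sub: "fst C \<subseteq> fst A" "\<forall>i xs. set xs \<subseteq> fst C \<longrightarrow> (snd C i xs \<longleftrightarrow> snd A i xs)"
    using assms unfolding substructure_def by auto
  have "holds C a = holds A a" using l(3) sub(2) by (cases a) auto
  then show "l \<in> diag L A" using l sub(1) unfolding diag_def by auto
qed

text \<open>Conversely, inclusion of diagrams between structures makes the smaller one a
  substructure: the literals n = n record the universe, the relational literals record
  the relations, and outside the language both interpretations are empty.\<close>
lemma diag_subset_substructure:
  assumes B1: "is_structure L B1" and B2: "is_structure L B2"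
    and D: "diag L B1 \<subseteq> diag L B2"
  shows "substructure L B1 B2"
proof -
  have universe: "fst B1 \<subseteq> fst B2"
  proof
    fix n assume "n \<in> fst B1"
    then have "(True, Eq n n) \<in> diag L B1" unfolding diag_def by auto
    then have "(True, Eq n n) \<in> diag L B2" using D by blast
    then show "n \<in> fst B2" unfolding diag_def by auto
  qed
  have "snd B1 i xs \<longleftrightarrow> snd B2 i xs" if xs: "set xs \<subseteq> fst B1" for i xs
  proof (cases "wf_atom L (Rel i xs)")
    case True
    then have "(snd B1 i xs, Rel i xs) \<in> diag L B1" using xs unfolding diag_def by auto
    then have "(snd B1 i xs, Rel i xs) \<in> diag L B2" using D by blast
    then show ?thesis unfolding diag_def by auto
  next
    case False
    then show ?thesis using B1 B2 unfolding is_structure_def by auto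
  qed
  then show ?thesis using B1 universe unfolding substructure_def by blast
qed

lemma transform_image_mono:
  assumes "diag L C \<subseteq> diag L A"
  shows "transform_image L \<Phi> C \<subseteq> transform_image L \<Phi> A"
  using assms unfolding transform_image_def by blast

lemma embedding_reflects_substructure_iso:
  assumes emb: "computable_embedding L K L' K' \<Phi>"
    and K'_struc: "K' \<subseteq> {B. is_structure L' B}"
    and K'_prop: "\<And>B1 B2. B1 \<in> K' \<Longrightarrow> B2 \<in> K' \<Longrightarrow> substructure L' B1 B2 \<Longrightarrow> iso L' B1 B2"
    and C: "C \<in> K" and A: "A \<in> K" and sub: "substructure L C A"
  shows "iso L C A"
proof -
  have images: "\<forall>X\<in>K. \<exists>B\<in>K'. transform_image L \<Phi> X = diag L' B"
    using emb unfolding computable_embedding_def computable_transformation_def by blast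
  obtain BC where BC: "BC \<in> K'" "transform_image L \<Phi> C = diag L' BC" using images C by blast
  obtain BA where BA: "BA \<in> K'" "transform_image L \<Phi> A = diag L' BA" using images A by blast
  have structures: "is_structure L' BC" "is_structure L' BA" using BC(1) BA(1) K'_struc by auto
  have "diag L' BC \<subseteq> diag L' BA"
    using transform_image_mono[OF substructure_diag_subset[OF sub], of \<Phi>] BC(2) BA(2) by simp
  then have "iso L' BC BA"
    using K'_prop[OF BC(1) BA(1)] diag_subset_substructure[OF structures] by blast
  then show ?thesis
    using emb C A structures BC(2) BA(2) unfolding computable_embedding_def by blast
qed

text \<open>A set of residues mod a prime q that contains a nonzero residue s and is closed
  under addition contains every residue, since the multiples of s exhaust Z/q.\<close>
lemma add_closed_mod_prime:
  fixes q s t :: nat and T :: "nat set"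
  assumes q: "prime q" and s: "s \<in> T" "0 < s" "s < q"
    and closed: "\<And>a b. a \<in> T \<Longrightarrow> b \<in> T \<Longrightarrow> (a + b) mod q \<in> T"
    and t: "t < q"
  shows "t \<in> T"
proof -
  have multiples: "(Suc k * s) mod q \<in> T" for k
  proof (induction k)
    case 0 then show ?case using s by simp
  next
    case (Suc k)
    have "((Suc k * s) mod q + s) mod q = (Suc (Suc k) * s) mod q"
      by (simp add: mod_add_right_eq add.commute)
    then show ?case using closed[OF Suc s(1)] by simp
  qed
  have "coprime s q"
    using q s by (metis coprime_commute nat_dvd_not_less prime_imp_coprime)
  then obtain k where "[s * k = t] (mod q)" using cong_solve_dvd_nat[of s q t] by auto
  then have "(s * k) mod q = t" using t by (simp add: cong_def)
  moreover have "(Suc (k + q - 1) * s) mod q = (s * k) mod q"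
    using prime_gt_0_nat[OF q] by (simp add: algebra_simps)
  ultimately show ?thesis using multiples[of "k + q - 1"] by simp
qed

lemma PF_presentation:
  assumes "B \<in> PF"
  obtains q :: nat and g where "prime q" "bij_betw g {0..<q} (fst B)"
    "\<And>a b c. a < q \<Longrightarrow> b < q \<Longrightarrow> c < q \<Longrightarrow> snd B 0 [g a, g b, g c] \<longleftrightarrow> (a + b) mod q = c"
proof -
  obtain q g where q: "prime q" and g: "bij_betw g {0..<q} (fst B)"
    "\<forall>i < 2. \<forall>xs. length xs = [3,3::nat] ! i \<and> set xs \<subseteq> {0..<q} \<longrightarrow>
        (snd (Zmod_struc q) i xs \<longleftrightarrow> snd B i (map g xs))"
    using assms unfolding PF_def iso_def field_lang_def by (auto simp: Zmod_struc_def)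
  have add: "snd B 0 [g a, g b, g c] \<longleftrightarrow> (a + b) mod q = c" if "a < q" "b < q" "c < q" for a b c
    using g(2)[rule_format, of 0 "[a, b, c]"] that by (simp add: Zmod_struc_def)
  show ?thesis by (rule that[OF q g(1) add])
qed

lemma PF_substructure_iso:
  assumes B1: "B1 \<in> PF" and B2: "B2 \<in> PF" and sub: "substructure field_lang B1 B2"
  shows "iso field_lang B1 B2"
proof -
  obtain p :: nat and f where p: "prime p" and f: "bij_betw f {0..<p} (fst B1)"
    and f_add: "\<And>a b c. a < p \<Longrightarrow> b < p \<Longrightarrow> c < p \<Longrightarrow>
                   snd B1 0 [f a, f b, f c] \<longleftrightarrow> (a + b) mod p = c"
    by (rule PF_presentation[OF B1]) (rule that)
  obtain q :: nat and g where q: "prime q" and g: "bij_betw g {0..<q} (fst B2)"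
    and g_add: "\<And>a b c. a < q \<Longrightarrow> b < q \<Longrightarrow> c < q \<Longrightarrow>
                   snd B2 0 [g a, g b, g c] \<longleftrightarrow> (a + b) mod q = c"
    by (rule PF_presentation[OF B2]) (rule that)
  have UV: "fst B1 \<subseteq> fst B2"
    and agree: "\<And>xs. set xs \<subseteq> fst B1 \<Longrightarrow> snd B1 0 xs \<longleftrightarrow> snd B2 0 xs"
    using sub unfolding substructure_def by auto
  have f_onto: "\<exists>c<p. u = f c" if "u \<in> fst B1" for u
    using f that unfolding bij_betw_def by force
  have g_onto: "\<exists>c<q. v = g c" if "v \<in> fst B2" for v
    using g that unfolding bij_betw_def by force
  define T where "T = {t. t < q \<and> g t \<in> fst B1}"
  have closed: "(a + b) mod q \<in> T" if "a \<in> T" "b \<in> T" for a b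
  proof -
    have a: "a < q" "g a \<in> fst B1" and b: "b < q" "g b \<in> fst B1" using that T_def by auto
    obtain a' b' where a': "a' < p" "g a = f a'" and b': "b' < p" "g b = f b'"
      using f_onto a(2) b(2) by metis
    define c' where "c' = (a' + b') mod p"
    have c': "c' < p" using prime_gt_0_nat[OF p] c'_def by simp
    have fc': "f c' \<in> fst B1" using f c' by (auto simp: bij_betw_def)
    obtain c where c: "c < q" "f c' = g c" using g_onto UV fc' by blast
    have "snd B1 0 [g a, g b, g c]" using f_add[OF a'(1) b'(1) c'] c'_def a' b' c by simp
    then have "snd B2 0 [g a, g b, g c]" using agree a b c fc' by simp
    then have "(a + b) mod q = c" using g_add a b c by simp
    then show ?thesis using T_def c fc' by auto
  qed
  have "f 0 \<noteq> f 1" "f 0 \<in> fst B1" "f 1 \<in> fst B1"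
    using f prime_gt_1_nat[OF p] unfolding bij_betw_def inj_on_def by force+
  then obtain x where x: "x \<in> fst B1" "x \<noteq> g 0" by metis
  then obtain s where s: "s < q" "x = g s" using g_onto UV by blast
  have "s \<in> T" "0 < s" using s x T_def by (auto intro: Nat.gr0I)
  then have all_T: "t \<in> T" if "t < q" for t
    using add_closed_mod_prime[OF q _ _ s(1) closed that] by blast
  have "fst B2 \<subseteq> fst B1" using g_onto all_T T_def by blast
  then show ?thesis using substructure_full_iso[OF sub] UV by blast
qed

theorem proposition3p3:
  fixes L :: lang and K :: "struc set"
  assumes "is_class L K"
    and "leq_c L K field_lang PF"
  shows "\<forall>A1\<in>K. \<forall>A2\<in>K. (\<exists>C. substructure L C A2 \<and> iso L A1 C) \<longrightarrow> iso L A1 A2"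
proof (intro ballI impI)
  fix A1 A2 assume A1: "A1 \<in> K" and A2: "A2 \<in> K" and "\<exists>C. substructure L C A2 \<and> iso L A1 C"
  then obtain C where C: "substructure L C A2" "iso L A1 C" by blast
  obtain \<Phi> where emb: "computable_embedding L K field_lang PF \<Phi>"
    using assms(2) unfolding leq_c_def by blast
  have "C \<in> K" using assms(1) A1 C unfolding is_class_def substructure_def by blast
  moreover have "PF \<subseteq> {B. is_structure field_lang B}" unfolding PF_def by auto
  ultimately have "iso L C A2"
    using embedding_reflects_substructure_iso[OF emb _ PF_substructure_iso] A2 C(1) by blast
  then show "iso L A1 A2" using iso_trans C(2) by blast
qed

end
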